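(* Let $A$ be a finite-dimensional associative algebra over $K=\mathbb{R}$ or $\mathbb{C}$ with unit $1$, and let $r\in A\wedge A$. Then the element $[[r,r]]=[r^{12},r^{13}]+[r^{12},r^{23}]+[r^{13},r^{23}]\in A^{\otimes3}$ commutes with every fully symmetric tensor in $A\otimes A\otimes A$ if and only if it commutes with $x\otimes1\otimes1+1\otimes x\otimes1+1\otimes1\otimes x$ for every $x\in A$, i.e. if and only if $[[r,r]]$ is invariant under the adjoint action of the Lie algebra $A_L$ on $A^{\otimes 3}$.
   Context: $A^{\otimes3}$ is an algebra with componentwise multiplication, and commutators are taken there. For $r=\sum_i\alpha_i\otimes\beta_i$, $r^{12}=\sum_i\alpha_i\otimes\beta_i\otimes1$, $r^{13}=\sum_i\alpha_i\otimes1\otimes\beta_i$, $r^{23}=\sum_i1\otimes\alpha_i\otimes\beta_i$. $A_L$ is the Lie algebra on $A$ with bracket $[a,b]=ab-ba$, acting on $A^{\otimes3}$ by $x\cdot T=[x\otimes1\otimes1+1\otimes x\otimes1+1\otimes1\otimes x,\,T]$. *)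

theory Defs
  imports Complex_Main
begin

text \<open>A finite-dimensional algebra A over K is modelled by a basis indexed by a finite
type 'i and structure constants c: e_i e_j = sum_k c i j k e_k. Elements of A are
coefficient vectors 'i => 'k; elements of A(x)A are 'i => 'i => 'k; elements of
A(x)A(x)A are ('i * 'i * 'i) => 'k.\<close>

definition amul :: "('i::finite \<Rightarrow> 'i \<Rightarrow> 'i \<Rightarrow> 'k::comm_ring) \<Rightarrow> ('i \<Rightarrow> 'k) \<Rightarrow> ('i \<Rightarrow> 'k) \<Rightarrow> ('i \<Rightarrow> 'k)" where
  "amul c a b = (\<lambda>k. \<Sum>i\<in>UNIV. \<Sum>j\<in>UNIV. a i * b j * c i j k)"

definition unital_assoc_algebra :: "('i::finite \<Rightarrow> 'i \<Rightarrow> 'i \<Rightarrow> 'k::comm_ring) \<Rightarrow> ('i \<Rightarrow> 'k) \<Rightarrow> bool" where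
  "unital_assoc_algebra c one \<longleftrightarrow>
     (\<forall>a b d. amul c (amul c a b) d = amul c a (amul c b d)) \<and>
     (\<forall>a. amul c one a = a \<and> amul c a one = a)"

definition tmul3 :: "('i::finite \<Rightarrow> 'i \<Rightarrow> 'i \<Rightarrow> 'k::comm_ring) \<Rightarrow> ('i \<times> 'i \<times> 'i \<Rightarrow> 'k) \<Rightarrow> ('i \<times> 'i \<times> 'i \<Rightarrow> 'k) \<Rightarrow> ('i \<times> 'i \<times> 'i \<Rightarrow> 'k)" where
  "tmul3 c T S = (\<lambda>(k1, k2, k3). \<Sum>(i1, i2, i3)\<in>UNIV. \<Sum>(j1, j2, j3)\<in>UNIV.
      T (i1, i2, i3) * S (j1, j2, j3) * c i1 j1 k1 * c i2 j2 k2 * c i3 j3 k3)"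

definition comm3 :: "('i::finite \<Rightarrow> 'i \<Rightarrow> 'i \<Rightarrow> 'k::comm_ring) \<Rightarrow> ('i \<times> 'i \<times> 'i \<Rightarrow> 'k) \<Rightarrow> ('i \<times> 'i \<times> 'i \<Rightarrow> 'k) \<Rightarrow> ('i \<times> 'i \<times> 'i \<Rightarrow> 'k)" where
  "comm3 c T S = (\<lambda>t. tmul3 c T S t - tmul3 c S T t)"

definition r12 :: "('i \<Rightarrow> 'i \<Rightarrow> 'k::comm_ring) \<Rightarrow> ('i \<Rightarrow> 'k) \<Rightarrow> ('i \<times> 'i \<times> 'i \<Rightarrow> 'k)" where
  "r12 r one = (\<lambda>(i, j, k). r i j * one k)"

definition r13 :: "('i \<Rightarrow> 'i \<Rightarrow> 'k::comm_ring) \<Rightarrow> ('i \<Rightarrow> 'k) \<Rightarrow> ('i \<times> 'i \<times> 'i \<Rightarrow> 'k)" where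
  "r13 r one = (\<lambda>(i, j, k). r i k * one j)"

definition r23 :: "('i \<Rightarrow> 'i \<Rightarrow> 'k::comm_ring) \<Rightarrow> ('i \<Rightarrow> 'k) \<Rightarrow> ('i \<times> 'i \<times> 'i \<Rightarrow> 'k)" where
  "r23 r one = (\<lambda>(i, j, k). one i * r j k)"

definition cybe :: "('i::finite \<Rightarrow> 'i \<Rightarrow> 'i \<Rightarrow> 'k::comm_ring) \<Rightarrow> ('i \<Rightarrow> 'k) \<Rightarrow> ('i \<Rightarrow> 'i \<Rightarrow> 'k) \<Rightarrow> ('i \<times> 'i \<times> 'i \<Rightarrow> 'k)" where
  "cybe c one r = (\<lambda>t. comm3 c (r12 r one) (r13 r one) t + comm3 c (r12 r one) (r23 r one) t
                  + comm3 c (r13 r one) (r23 r one) t)"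

definition skew2 :: "('i \<Rightarrow> 'i \<Rightarrow> 'k::comm_ring) \<Rightarrow> bool" where
  "skew2 r \<longleftrightarrow> (\<forall>i j. r j i = - r i j)"

definition fully_symmetric3 :: "('i \<times> 'i \<times> 'i \<Rightarrow> 'k) \<Rightarrow> bool" where
  "fully_symmetric3 T \<longleftrightarrow> (\<forall>i j k.
      T (i, j, k) = T (j, i, k) \<and> T (i, j, k) = T (i, k, j) \<and> T (i, j, k) = T (k, j, i) \<and>
      T (i, j, k) = T (j, k, i) \<and> T (i, j, k) = T (k, i, j))"

definition delta3 :: "('i \<Rightarrow> 'k::comm_ring) \<Rightarrow> ('i \<Rightarrow> 'k) \<Rightarrow> ('i \<times> 'i \<times> 'i \<Rightarrow> 'k)" where
  "delta3 one x = (\<lambda>(i, j, k). x i * one j * one k + one i * x j * one k + one i * one j * x k)"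

end

theory Submission
  imports Defs
begin

(* Write Delta x = x(x)1(x)1 + 1(x)x(x)1 + 1(x)1(x)x. In the associative algebra A(x)A(x)A the
   symmetrization of a pure tensor is a noncommutative polynomial in such elements,
     Sym(x(x)y(x)z) = Delta x Delta y Delta z - Delta(xy) Delta z - Delta(xz) Delta y
                      - Delta x Delta(yz) + Delta(xyz) + Delta(xzy),
   and a fully symmetric tensor T is one sixth of its symmetrization Sym T, which is a linear
   combination of symmetrized pure tensors. So in characteristic 0 the fully symmetric tensors lie
   in the subalgebra generated by the Delta x, and anything commuting with every Delta x commutes
   with every fully symmetric tensor. This holds for every element of A(x)A(x)A in place of
   [[r,r]]. *)

lemma amul_add_left: "amul c (\<lambda>t. X t + Y t) Z = (\<lambda>t. amul c X Z t + amul c Y Z t)"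
  by (simp add: fun_eq_iff amul_def algebra_simps sum.distrib)

lemma amul_add_right: "amul c Z (\<lambda>t. X t + Y t) = (\<lambda>t. amul c Z X t + amul c Z Y t)"
  by (simp add: fun_eq_iff amul_def algebra_simps sum.distrib)

lemma amul_diff_left: "amul c (\<lambda>t. X t - Y t) Z = (\<lambda>t. amul c X Z t - amul c Y Z t)"
  by (simp add: fun_eq_iff amul_def algebra_simps sum_subtractf)

lemma amul_diff_right: "amul c Z (\<lambda>t. X t - Y t) = (\<lambda>t. amul c Z X t - amul c Z Y t)"
  by (simp add: fun_eq_iff amul_def algebra_simps sum_subtractf)

lemma amul_scale_left: "amul c (\<lambda>t. s * X t) Z = (\<lambda>t. s * amul c X Z t)"
  by (simp add: fun_eq_iff amul_def sum_distrib_left ac_simps)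

lemma amul_scale_right: "amul c Z (\<lambda>t. s * X t) = (\<lambda>t. s * amul c Z X t)"
  by (simp add: fun_eq_iff amul_def sum_distrib_left ac_simps)

lemma amul_sum_left: "amul c (\<lambda>t. \<Sum>p\<in>P. X p t) Z = (\<lambda>t. \<Sum>p\<in>P. amul c (X p) Z t)"
  by (simp add: amul_def sum_distrib_right fun_eq_iff sum.swap[where B = P])

lemma amul_sum_right: "amul c Z (\<lambda>t. \<Sum>p\<in>P. X p t) = (\<lambda>t. \<Sum>p\<in>P. amul c Z (X p) t)"
  by (simp add: amul_def sum_distrib_right sum_distrib_left fun_eq_iff sum.swap[where B = P])

definition unit_vec :: "'i \<Rightarrow> 'i \<Rightarrow> 'k::zero_neq_one" where
  "unit_vec i = (\<lambda>j. if j = i then 1 else 0)"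

lemma sum_unit_vec_expansion:
  fixes x :: "'i::finite \<Rightarrow> 'k::comm_ring_1"
  shows "(\<lambda>t. \<Sum>i\<in>UNIV. x i * unit_vec i t) = x"
  by (simp add: fun_eq_iff unit_vec_def if_distrib[of "(*) _"] cong: if_cong)

lemma amul_assoc_of_unit_vecs:
  fixes c :: "'i::finite \<Rightarrow> 'i \<Rightarrow> 'i \<Rightarrow> 'k::comm_ring_1"
  assumes "\<And>i j l. amul c (amul c (unit_vec i) (unit_vec j)) (unit_vec l)
                  = amul c (unit_vec i) (amul c (unit_vec j) (unit_vec l))"
  shows "amul c (amul c x y) z = amul c x (amul c y z)"
proof -
  have "amul c (amul c (\<lambda>t. \<Sum>i\<in>UNIV. x i * unit_vec i t) (\<lambda>t. \<Sum>j\<in>UNIV. y j * unit_vec j t))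
          (\<lambda>t. \<Sum>l\<in>UNIV. z l * unit_vec l t)
      = amul c (\<lambda>t. \<Sum>i\<in>UNIV. x i * unit_vec i t)
          (amul c (\<lambda>t. \<Sum>j\<in>UNIV. y j * unit_vec j t) (\<lambda>t. \<Sum>l\<in>UNIV. z l * unit_vec l t))"
    by (simp add: amul_sum_left amul_sum_right amul_scale_left amul_scale_right assms)
  then show ?thesis
    by (simp only: sum_unit_vec_expansion)
qed

definition tensor3 :: "('i \<Rightarrow> 'k::times) \<Rightarrow> ('i \<Rightarrow> 'k) \<Rightarrow> ('i \<Rightarrow> 'k) \<Rightarrow> 'i \<times> 'i \<times> 'i \<Rightarrow> 'k" where
  "tensor3 x y z = (\<lambda>(i, j, k). x i * y j * z k)"

definition tensor3_const :: "('i \<Rightarrow> 'i \<Rightarrow> 'i \<Rightarrow> 'k::times)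
    \<Rightarrow> 'i \<times> 'i \<times> 'i \<Rightarrow> 'i \<times> 'i \<times> 'i \<Rightarrow> 'i \<times> 'i \<times> 'i \<Rightarrow> 'k" where
  "tensor3_const c = (\<lambda>(i1, i2, i3) (j1, j2, j3) (k1, k2, k3). c i1 j1 k1 * c i2 j2 k2 * c i3 j3 k3)"

lemma tmul3_eq_amul: "tmul3 c = amul (tensor3_const c)"
  by (simp add: fun_eq_iff tmul3_def amul_def tensor3_const_def split_def ac_simps)

lemma sum_tensor3:
  fixes x y z :: "'i::finite \<Rightarrow> 'k::comm_semiring_0"
  shows "(\<Sum>p\<in>UNIV. tensor3 x y z p) = sum x UNIV * sum y UNIV * sum z UNIV"
  unfolding UNIV_Times_UNIV[symmetric] sum.cartesian_product'
  by (simp add: tensor3_def sum_distrib_left[symmetric] sum_distrib_right[symmetric] mult.assoc[symmetric])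

lemma amul_tensor3:
  fixes c :: "'i::finite \<Rightarrow> 'i \<Rightarrow> 'i \<Rightarrow> 'k::comm_ring"
  shows "amul (tensor3_const c) (tensor3 x y z) (tensor3 x' y' z') = tensor3 (amul c x x') (amul c y y') (amul c z z')"
proof (rule ext, clarify)
  fix k1 k2 k3
  have "amul (tensor3_const c) (tensor3 x y z) (tensor3 x' y' z') (k1, k2, k3)
      = (\<Sum>p\<in>UNIV. tensor3 (\<lambda>i. \<Sum>j\<in>UNIV. x i * x' j * c i j k1)
          (\<lambda>i. \<Sum>j\<in>UNIV. y i * y' j * c i j k2) (\<lambda>i. \<Sum>j\<in>UNIV. z i * z' j * c i j k3) p)"
    unfolding amul_def
  proof (rule sum.cong[OF refl])
    fix p :: "'i \<times> 'i \<times> 'i"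
    obtain i1 i2 i3 where p: "p = (i1, i2, i3)" by (cases p)
    show "(\<Sum>q\<in>UNIV. tensor3 x y z p * tensor3 x' y' z' q * tensor3_const c p q (k1, k2, k3))
        = tensor3 (\<lambda>i. \<Sum>j\<in>UNIV. x i * x' j * c i j k1)
          (\<lambda>i. \<Sum>j\<in>UNIV. y i * y' j * c i j k2) (\<lambda>i. \<Sum>j\<in>UNIV. z i * z' j * c i j k3) p"
      \<comment> \<open>unfold only the right-hand side, whose product of three sums \<open>sum_tensor3\<close> folds back\<close>
      unfolding p tensor3_def[of "\<lambda>i. \<Sum>j\<in>UNIV. x i * x' j * c i j k1"]
      by (simp add: sum_tensor3[symmetric]) (simp add: tensor3_def tensor3_const_def split_def ac_simps)
  qed
  also have "\<dots> = tensor3 (amul c x x') (amul c y y') (amul c z z') (k1, k2, k3)"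
    by (simp only: sum_tensor3) (simp add: tensor3_def amul_def)
  finally show "amul (tensor3_const c) (tensor3 x y z) (tensor3 x' y' z') (k1, k2, k3)
      = tensor3 (amul c x x') (amul c y y') (amul c z z') (k1, k2, k3)" .
qed

lemma unit_vec_triple:
  "unit_vec (i, j, k) = (tensor3 (unit_vec i) (unit_vec j) (unit_vec k) :: _ \<Rightarrow> 'k::semiring_1)"
  by (auto simp: fun_eq_iff unit_vec_def tensor3_def)

lemma amul_tensor3_const_assoc:
  fixes c :: "'i::finite \<Rightarrow> 'i \<Rightarrow> 'i \<Rightarrow> 'k::comm_ring_1"
  assumes "\<And>x y z. amul c (amul c x y) z = amul c x (amul c y z)"
  shows "amul (tensor3_const c) (amul (tensor3_const c) X Y) Z
       = amul (tensor3_const c) X (amul (tensor3_const c) Y Z)"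
  by (rule amul_assoc_of_unit_vecs) (simp add: split_paired_all unit_vec_triple amul_tensor3 assms)

lemma delta3_eq_tensor3: "delta3 one x = (\<lambda>t. tensor3 x one one t + tensor3 one x one t + tensor3 one one x t)"
  by (simp add: fun_eq_iff delta3_def tensor3_def)

lemma fully_symmetric3_delta3: "fully_symmetric3 (delta3 one x)"
  by (simp add: fully_symmetric3_def delta3_def ac_simps)

definition symmetrize3 :: "('i \<times> 'i \<times> 'i \<Rightarrow> 'k::plus) \<Rightarrow> 'i \<times> 'i \<times> 'i \<Rightarrow> 'k" where
  "symmetrize3 T =
     (\<lambda>(i, j, k). T (i, j, k) + T (i, k, j) + T (j, i, k) + T (j, k, i) + T (k, i, j) + T (k, j, i))"

lemma symmetrize3_lincomb:
  fixes f :: "'q \<Rightarrow> 'k::comm_semiring_0"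
  shows "symmetrize3 (\<lambda>t. \<Sum>q\<in>Q. f q * X q t) = (\<lambda>t. \<Sum>q\<in>Q. f q * symmetrize3 (X q) t)"
  by (simp add: fun_eq_iff symmetrize3_def sum.distrib distrib_left)

lemma symmetrize3_fully_symmetric3:
  fixes T :: "'i \<times> 'i \<times> 'i \<Rightarrow> 'k::comm_ring_1"
  shows "fully_symmetric3 T \<Longrightarrow> symmetrize3 T = (\<lambda>t. 6 * T t)"
  by (auto simp: fun_eq_iff symmetrize3_def fully_symmetric3_def algebra_simps)

lemma symmetrize3_tensor3:
  fixes x y z :: "'i \<Rightarrow> 'k::comm_semiring"
  shows "symmetrize3 (tensor3 x y z)
   = (\<lambda>t. tensor3 x y z t + tensor3 x z y t + tensor3 y x z t + tensor3 y z x t + tensor3 z x y t + tensor3 z y x t)"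
  by (simp add: fun_eq_iff symmetrize3_def tensor3_def ac_simps)

(* Delta x Delta y - Delta(xy) is the sum of the tensors with x and y in two different slots;
   multiplying by Delta z puts z into the third slot, onto x, or onto y. *)
lemma symmetrize3_tensor3_eq_delta3_poly:
  fixes c :: "'i::finite \<Rightarrow> 'i \<Rightarrow> 'i \<Rightarrow> 'k::comm_ring"
  assumes "unital_assoc_algebra c one"
  shows "symmetrize3 (tensor3 x y z) = (\<lambda>t.
      amul (tensor3_const c) (amul (tensor3_const c) (delta3 one x) (delta3 one y)) (delta3 one z) t
    - amul (tensor3_const c) (delta3 one (amul c x y)) (delta3 one z) t
    - amul (tensor3_const c) (delta3 one (amul c x z)) (delta3 one y) t
    - amul (tensor3_const c) (delta3 one x) (delta3 one (amul c y z)) t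
    + delta3 one (amul c x (amul c y z)) t + delta3 one (amul c x (amul c z y)) t)"
  using assms unfolding unital_assoc_algebra_def
  by (simp add: symmetrize3_tensor3 delta3_eq_tensor3 amul_add_left amul_add_right amul_tensor3)
    (simp add: fun_eq_iff algebra_simps)

definition commutant :: "('i::finite \<Rightarrow> 'i \<Rightarrow> 'i \<Rightarrow> 'k::comm_ring) \<Rightarrow> ('i \<Rightarrow> 'k) \<Rightarrow> ('i \<Rightarrow> 'k) set" where
  "commutant c K = {X. amul c K X = amul c X K}"

lemma comm3_eq_0_iff: "comm3 c K T = (\<lambda>_. 0) \<longleftrightarrow> T \<in> commutant (tensor3_const c) K"
  by (simp add: comm3_def commutant_def tmul3_eq_amul fun_eq_iff)

lemma commutant_add: "X \<in> commutant c K \<Longrightarrow> Y \<in> commutant c K \<Longrightarrow> (\<lambda>t. X t + Y t) \<in> commutant c K"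
  by (simp add: commutant_def amul_add_left amul_add_right)

lemma commutant_diff: "X \<in> commutant c K \<Longrightarrow> Y \<in> commutant c K \<Longrightarrow> (\<lambda>t. X t - Y t) \<in> commutant c K"
  by (simp add: commutant_def amul_diff_left amul_diff_right)

lemma commutant_lincomb:
  "(\<And>q. q \<in> Q \<Longrightarrow> X q \<in> commutant c K) \<Longrightarrow> (\<lambda>t. \<Sum>q\<in>Q. f q * X q t) \<in> commutant c K"
  by (simp add: commutant_def amul_sum_left amul_sum_right amul_scale_left amul_scale_right)

lemma commutant_mult:
  assumes "\<And>X Y Z. amul c (amul c X Y) Z = amul c X (amul c Y Z)"
    and "X \<in> commutant c K" and "Y \<in> commutant c K"
  shows "amul c X Y \<in> commutant c K"
  using assms by (simp add: commutant_def) metis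

lemma commutant_numeral_cancel:
  fixes c :: "'i::finite \<Rightarrow> 'i \<Rightarrow> 'i \<Rightarrow> 'k::field_char_0"
  shows "(\<lambda>t. numeral n * X t) \<in> commutant c K \<Longrightarrow> X \<in> commutant c K"
  by (simp add: commutant_def amul_scale_left amul_scale_right fun_eq_iff)

lemma symmetrize3_tensor3_in_commutant:
  fixes c :: "'i::finite \<Rightarrow> 'i \<Rightarrow> 'i \<Rightarrow> 'k::comm_ring_1"
  assumes alg: "unital_assoc_algebra c one"
    and delta: "\<And>x. delta3 one x \<in> commutant (tensor3_const c) K"
  shows "symmetrize3 (tensor3 x y z) \<in> commutant (tensor3_const c) K"
proof -
  have "amul (tensor3_const c) (amul (tensor3_const c) X Y) Z
      = amul (tensor3_const c) X (amul (tensor3_const c) Y Z)" for X Y Z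
    using alg unfolding unital_assoc_algebra_def by (blast intro: amul_tensor3_const_assoc)
  then show ?thesis
    unfolding symmetrize3_tensor3_eq_delta3_poly[OF alg]
    by (intro commutant_add commutant_diff commutant_mult delta)
qed

lemma fully_symmetric3_in_commutant:
  fixes c :: "'i::finite \<Rightarrow> 'i \<Rightarrow> 'i \<Rightarrow> 'k::field_char_0"
  assumes alg: "unital_assoc_algebra c one"
    and delta: "\<And>x. delta3 one x \<in> commutant (tensor3_const c) K"
    and "fully_symmetric3 T"
  shows "T \<in> commutant (tensor3_const c) K"
proof -
  have "(\<lambda>t. 6 * T t) = symmetrize3 (\<lambda>t. \<Sum>q\<in>UNIV. T q * unit_vec q t)"
    using assms(3) by (simp only: sum_unit_vec_expansion symmetrize3_fully_symmetric3)
  also have "\<dots> = (\<lambda>t. \<Sum>q\<in>UNIV. T q * symmetrize3 (unit_vec q) t)"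
    by (rule symmetrize3_lincomb)
  also have "\<dots> \<in> commutant (tensor3_const c) K"
    by (rule commutant_lincomb)
      (clarsimp simp: unit_vec_triple symmetrize3_tensor3_in_commutant[OF alg delta])
  finally show ?thesis
    by (rule commutant_numeral_cancel)
qed

lemma fully_symmetric3_in_commutant_iff_delta3:
  fixes c :: "'i::finite \<Rightarrow> 'i \<Rightarrow> 'i \<Rightarrow> 'k::field_char_0"
  assumes "unital_assoc_algebra c one"
  shows "(\<forall>T. fully_symmetric3 T \<longrightarrow> T \<in> commutant (tensor3_const c) K)
     \<longleftrightarrow> (\<forall>x. delta3 one x \<in> commutant (tensor3_const c) K)"
  using fully_symmetric3_in_commutant[OF assms] fully_symmetric3_delta3 by blast

theorem mainTheorem6:
  fixes c :: "'i::finite \<Rightarrow> 'i \<Rightarrow> 'i \<Rightarrow> 'k::real_normed_field"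
    and one :: "'i \<Rightarrow> 'k"
    and r :: "'i \<Rightarrow> 'i \<Rightarrow> 'k"
  assumes "unital_assoc_algebra c one"
    and "skew2 r"
  shows "(\<forall>T. fully_symmetric3 T \<longrightarrow> comm3 c (cybe c one r) T = (\<lambda>_. 0))
     \<longleftrightarrow> (\<forall>x. comm3 c (cybe c one r) (delta3 one x) = (\<lambda>_. 0))"
  unfolding comm3_eq_0_iff by (rule fully_symmetric3_in_commutant_iff_delta3[OF assms(1)])

end
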